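(* Let $M$ be a triangulated compact 3-manifold, possibly with boundary, whose triangulation contains $t$ tetrahedra, and let $\mathcal{C}_M\subset\mathbb{R}^{7t}$ be its Haken normal cone. (1) Every minimal vertex solution $v\in\mathbb{Z}^{7t}$ of $\mathcal{C}_M$ satisfies $\max_{1\le i\le 7t} v_i\le 2^{7t-1}$. (2) Every element $v\in\mathbb{Z}^{7t}$ of the minimal Hilbert basis of $\mathcal{C}_M$ satisfies $\max_{1\le i\le 7t} v_i\le t\cdot 2^{7t+2}$.
   Context: Coordinates of $\mathbb{R}^{7t}$ are indexed by pairs (tetrahedron $T$, elementary normal disk type in $T$), where each tetrahedron has 7 types: 4 triangle types (separating one vertex from the other three) and 3 quadrilateral types (separating two vertices from the other two). The Haken normal cone $\mathcal{C}_M$ is the set of $v\in\mathbb{R}^{7t}$ with $v_i\ge0$ for all $i$ and satisfying the matching equations: for each face $F$ shared by two tetrahedra $T_1,T_2$ and each pair of sides of $F$, the sum of the two coordinates of disk types in $T_1$ that meet $F$ in an arc joining that pair of sides equals the corresponding sum for $T_2$ (each such equation has the form $v_{k_1}+v_{k_2}=v_{k_3}+v_{k_4}$). A minimal vertex solution is the smallest nonzero integer point on an extreme ray of $\mathcal{C}_M$. The minimal Hilbert basis of $\mathcal{C}_M$ is the set of nonzero $v\in\mathcal{C}_M\cap\mathbb{Z}^{7t}$ that cannot be written as $v_1+v_2$ with $v_1,v_2$ nonzero elements of $\mathcal{C}_M\cap\mathbb{Z}^{7t}$. *)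

theory Defs
  imports Complex_Main
begin

text \<open>Tetrahedra are numbered 0..t-1, each with vertices 0..3. The face of tetrahedron T
opposite vertex f is called face (T,f). A gluing gl T f = Some (T', s) means that face (T,f)
is identified with face (T', s f) of tetrahedron T' via the vertex bijection s (restricted to
the vertices of the face). Unglued faces (None) form the boundary.\<close>

type_synonym gluing = "nat \<Rightarrow> nat \<Rightarrow> (nat \<times> (nat \<Rightarrow> nat)) option"

definition valid_gluing :: "nat \<Rightarrow> gluing \<Rightarrow> bool" where
  "valid_gluing t gl \<longleftrightarrow>
     (\<forall>T f. (t \<le> T \<or> 4 \<le> f) \<longrightarrow> gl T f = None) \<and>
     (\<forall>T f T' s. gl T f = Some (T', s) \<longrightarrow>
        T' < t \<and> bij_betw s {..<4} {..<4} \<and> (T', s f) \<noteq> (T, f) \<and>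
        (\<exists>s'. gl T' (s f) = Some (T, s') \<and> (\<forall>i<4. s' (s i) = i)))"

definition corner_rel :: "gluing \<Rightarrow> ((nat \<times> nat) \<times> (nat \<times> nat)) set" where
  "corner_rel gl = {((T, v), (T', s v)) | T v f T' s. gl T f = Some (T', s) \<and> v < 4 \<and> v \<noteq> f}"

text \<open>Identification of oriented edges (T,a,b); equivalently of vertices of vertex links.\<close>
definition oedge_rel :: "gluing \<Rightarrow> ((nat \<times> nat \<times> nat) \<times> (nat \<times> nat \<times> nat)) set" where
  "oedge_rel gl = {((T, a, b), (T', s a, s b)) | T a b f T' s.
      gl T f = Some (T', s) \<and> a < 4 \<and> b < 4 \<and> a \<noteq> b \<and> f \<noteq> a \<and> f \<noteq> b}"

text \<open>Identification of edges of vertex links: (T,v,f) is the edge of the link triangle at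
corner (T,v) lying in face (T,f).\<close>
definition linkedge_rel :: "gluing \<Rightarrow> ((nat \<times> nat \<times> nat) \<times> (nat \<times> nat \<times> nat)) set" where
  "linkedge_rel gl = {((T, v, f), (T', s v, s f)) | T v f T' s.
      gl T f = Some (T', s) \<and> v < 4 \<and> v \<noteq> f}"

definition eqv :: "('a \<times> 'a) set \<Rightarrow> ('a \<times> 'a) set" where
  "eqv R = (R \<union> R\<inverse>)\<^sup>*"

text \<open>The vertex link of the vertex of M containing corner c: its triangles, edges, vertices.\<close>
definition link_tris :: "gluing \<Rightarrow> nat \<times> nat \<Rightarrow> (nat \<times> nat) set" where
  "link_tris gl c = eqv (corner_rel gl) `` {c}"

definition link_edges :: "gluing \<Rightarrow> nat \<times> nat \<Rightarrow> (nat \<times> nat \<times> nat) set" where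
  "link_edges gl c = {(T, v, f). (T, v) \<in> link_tris gl c \<and> f < 4 \<and> f \<noteq> v}"

definition link_verts :: "gluing \<Rightarrow> nat \<times> nat \<Rightarrow> (nat \<times> nat \<times> nat) set" where
  "link_verts gl c = {(T, v, w). (T, v) \<in> link_tris gl c \<and> w < 4 \<and> w \<noteq> v}"

definition link_euler :: "gluing \<Rightarrow> nat \<times> nat \<Rightarrow> int" where
  "link_euler gl c =
     int (card (link_verts gl c // eqv (oedge_rel gl)))
   - int (card (link_edges gl c // eqv (linkedge_rel gl)))
   + int (card (link_tris gl c))"

definition link_has_boundary :: "gluing \<Rightarrow> nat \<times> nat \<Rightarrow> bool" where
  "link_has_boundary gl c \<longleftrightarrow> (\<exists>(T, v, f) \<in> link_edges gl c. gl T f = None)"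

text \<open>The glued space is a compact 3-manifold (possibly with boundary): every (connected)
vertex link is a 2-sphere (closed, Euler characteristic 2) or a disk (with boundary, Euler
characteristic 1), and no edge is identified with itself in reverse.\<close>
definition triangulated_3manifold :: "nat \<Rightarrow> gluing \<Rightarrow> bool" where
  "triangulated_3manifold t gl \<longleftrightarrow>
     valid_gluing t gl \<and>
     (\<forall>T a b. T < t \<and> a < 4 \<and> b < 4 \<and> a \<noteq> b \<longrightarrow>
        ((T, a, b), (T, b, a)) \<notin> eqv (oedge_rel gl)) \<and>
     (\<forall>T v. T < t \<and> v < 4 \<longrightarrow>
        (\<not> link_has_boundary gl (T, v) \<and> link_euler gl (T, v) = 2) \<or>
        (link_has_boundary gl (T, v) \<and> link_euler gl (T, v) = 1))"

text \<open>Vectors of R^(7t) are functions nat => real vanishing at indices >= 7t. Coordinate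
7*T + d: for d < 4 the triangle type in T cutting off vertex d; for d = 3 + k (k = 1,2,3)
the quadrilateral type in T separating vertices {0,k} from the other two.\<close>

definition coord :: "nat \<Rightarrow> nat \<Rightarrow> nat" where
  "coord T d = 7 * T + d"

text \<open>Quad type separating the pair {a,b} from the complementary pair.\<close>
definition quad :: "nat \<Rightarrow> nat \<Rightarrow> nat" where
  "quad a b = 3 + (if a = 0 then b else if b = 0 then a else 6 - a - b)"

text \<open>Sum of the coordinates of disk types of T meeting face (T,f) in the normal arc that cuts
off vertex v of that face (i.e. the arc joining the two sides of the face incident to v): the
triangle at v and the quad separating {f,v} from the rest.\<close>
definition arc_sum :: "nat \<Rightarrow> nat \<Rightarrow> nat \<Rightarrow> (nat \<Rightarrow> real) \<Rightarrow> real" where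
  "arc_sum T f v x = x (coord T v) + x (coord T (quad f v))"

definition matching_eqns :: "gluing \<Rightarrow> (nat \<Rightarrow> real) \<Rightarrow> bool" where
  "matching_eqns gl x \<longleftrightarrow>
     (\<forall>T f T' s v. gl T f = Some (T', s) \<and> v < 4 \<and> v \<noteq> f \<longrightarrow>
        arc_sum T f v x = arc_sum T' (s f) (s v) x)"

definition haken_cone :: "nat \<Rightarrow> gluing \<Rightarrow> (nat \<Rightarrow> real) set" where
  "haken_cone t gl = {x. (\<forall>i. 7 * t \<le> i \<longrightarrow> x i = 0) \<and> (\<forall>i < 7 * t. 0 \<le> x i) \<and>
                         matching_eqns gl x}"

definition is_integral :: "(nat \<Rightarrow> real) \<Rightarrow> bool" where
  "is_integral x \<longleftrightarrow> (\<forall>i. x i \<in> \<int>)"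

definition ray :: "(nat \<Rightarrow> real) \<Rightarrow> (nat \<Rightarrow> real) set" where
  "ray r = {(\<lambda>i. c * r i) | c. 0 \<le> c}"

definition extreme_ray :: "(nat \<Rightarrow> real) set \<Rightarrow> (nat \<Rightarrow> real) \<Rightarrow> bool" where
  "extreme_ray C r \<longleftrightarrow> r \<in> C \<and> r \<noteq> (\<lambda>i. 0) \<and>
     (\<forall>a\<in>C. \<forall>b\<in>C. (\<lambda>i. a i + b i) = r \<longrightarrow> a \<in> ray r \<and> b \<in> ray r)"

definition minimal_vertex_solution :: "nat \<Rightarrow> gluing \<Rightarrow> (nat \<Rightarrow> real) \<Rightarrow> bool" where
  "minimal_vertex_solution t gl v \<longleftrightarrow>
     (\<exists>r. extreme_ray (haken_cone t gl) r \<and> v \<in> ray r \<and> v \<noteq> (\<lambda>i. 0) \<and> is_integral v \<and>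
        (\<forall>w \<in> ray r. w \<noteq> (\<lambda>i. 0) \<and> is_integral w \<longrightarrow> (\<exists>c\<ge>1. w = (\<lambda>i. c * v i))))"

definition hilbert_basis :: "nat \<Rightarrow> gluing \<Rightarrow> (nat \<Rightarrow> real) set" where
  "hilbert_basis t gl = {v. v \<in> haken_cone t gl \<and> is_integral v \<and> v \<noteq> (\<lambda>i. 0) \<and>
     \<not> (\<exists>a b. a \<in> haken_cone t gl \<and> b \<in> haken_cone t gl \<and> is_integral a \<and> is_integral b \<and>
            a \<noteq> (\<lambda>i. 0) \<and> b \<noteq> (\<lambda>i. 0) \<and> v = (\<lambda>i. a i + b i))}"

end

(*
  An extreme ray r of the Haken cone is the solution line of an integral linear system: the
  matching equations together with x_i = 0 for every coordinate where r vanishes.  Every row of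
  this system has Euclidean norm at most 2.  Take a maximal nonsingular k x k minor of the system
  (k < 7t because the solution space is nonzero) and border it by one further column; the
  cofactors of the bordered minor form a nonzero integral solution (Cramer's rule), and each
  cofactor is a k x k minor, hence at most 2^k <= 2^(7t-1) in absolute value by Hadamard's
  inequality.  Up to sign this solution lies on the ray, which bounds the minimal vertex solutions.

  For the Hilbert basis, repeatedly subtracting the largest admissible multiple of such a bounded
  ray point (of an extreme ray supported inside the current support) kills a coordinate each time,
  so every v in the cone is a nonnegative combination of at most 7t bounded ray points w_j.  If
  some coefficient is at least 1, then v - w_j is again an integral point of the cone and
  irreducibility forces v = w_j; otherwise v <= 7t 2^(7t-1) <= t 2^(7t+2).
*)
theory Submission
  imports Defs "Jordan_Normal_Form.Determinant"
begin

section \<open>Hadamard's inequality\<close>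

definition quad_form :: "nat \<Rightarrow> real mat \<Rightarrow> (nat \<Rightarrow> real) \<Rightarrow> real" where
  "quad_form n G x = (\<Sum>i<n. \<Sum>j<n. x i * G $$ (i,j) * x j)"

definition psd_mat :: "nat \<Rightarrow> real mat \<Rightarrow> bool" where
  "psd_mat n G \<longleftrightarrow> G \<in> carrier_mat n n \<and> (\<forall>i<n. \<forall>j<n. G $$ (i,j) = G $$ (j,i))
     \<and> (\<forall>x. 0 \<le> quad_form n G x)"

lemma sum_lessThan_of_bool_eq:
  fixes f :: "nat \<Rightarrow> 'a::comm_semiring_1"
  assumes "p < n"
  shows "(\<Sum>j<n. f j * of_bool (j = p)) = f p"
proof -
  have "{..<n} \<inter> {j. j = p} = {p}" using assms by auto
  then show ?thesis by simp
qed

lemma quad_form_two_point: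
  assumes "p < n" "q < n"
  shows "quad_form n G (\<lambda>l. a * of_bool (l = p) + b * of_bool (l = q))
       = a * a * G $$ (p,p) + a * b * (G $$ (p,q) + G $$ (q,p)) + b * b * G $$ (q,q)"
proof -
  have "quad_form n G (\<lambda>l. a * of_bool (l = p) + b * of_bool (l = q))
     = (\<Sum>i<n. (a * G $$ (i,p) + b * G $$ (i,q)) * (a * of_bool (i = p) + b * of_bool (i = q)))"
    unfolding quad_form_def
    by (intro sum.cong refl)
      (simp add: algebra_simps sum.distrib sum_distrib_left[symmetric] sum_lessThan_of_bool_eq assms)
  also have "\<dots> = a * a * G $$ (p,p) + a * b * (G $$ (p,q) + G $$ (q,p)) + b * b * G $$ (q,q)"
    by (simp add: algebra_simps sum.distrib sum_distrib_left[symmetric] sum_lessThan_of_bool_eq assms)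
  finally show ?thesis .
qed

lemma psd_mat_diag_nonneg:
  assumes "psd_mat n G" "p < n"
  shows "0 \<le> G $$ (p,p)"
proof -
  have "0 \<le> quad_form n G (\<lambda>l. of_bool (l = p))" using assms(1) by (simp add: psd_mat_def)
  then show ?thesis using quad_form_two_point[of p n p G 1 0] assms(2) by simp
qed

lemma psd_mat_zero_diag_imp_zero_row:
  assumes G: "psd_mat n G" and p: "p < n" "G $$ (p,p) = 0" and j: "j < n"
  shows "G $$ (p,j) = 0"
proof (rule ccontr)
  assume nz: "G $$ (p,j) \<noteq> 0"
  have sym: "G $$ (j,p) = G $$ (p,j)" using G p j by (simp add: psd_mat_def)
  \<comment> \<open>as G(p,p) = 0, the form is affine in the weight s on e_p, so it cannot stay nonnegative\<close>
  have "quad_form n G (\<lambda>l. s * of_bool (l = p) + 1 * of_bool (l = j))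
      = 2 * s * G $$ (p,j) + G $$ (j,j)" for s
    using quad_form_two_point[OF p(1) j, of G s 1] p(2) sym by simp
  moreover have "0 \<le> quad_form n G x" for x using G by (simp add: psd_mat_def)
  ultimately have "0 \<le> 2 * s * G $$ (p,j) + G $$ (j,j)" for s by metis
  from this[of "- (G $$ (j,j) + 1) / (2 * G $$ (p,j))"] nz show False
    by (simp add: field_simps)
qed

definition schur_complement :: "nat \<Rightarrow> real mat \<Rightarrow> real mat" where
  "schur_complement n G =
     mat n n (\<lambda>(i,j). G $$ (Suc i, Suc j) - G $$ (Suc i, 0) * G $$ (0, Suc j) / G $$ (0,0))"

lemma det_schur_complement:
  assumes G: "G \<in> carrier_mat (Suc n) (Suc n)" and a: "G $$ (0,0) \<noteq> 0"
  shows "det G = G $$ (0,0) * det (schur_complement n G)"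
proof -
  define a where "a = G $$ (0,0)"
  \<comment> \<open>left multiplication by E subtracts G(i,0)/a times row 0 from every row i > 0\<close>
  define E where
    "E = mat (Suc n) (Suc n) (\<lambda>(i,j). if i = j then 1 else if j = 0 then - G $$ (i,0) / a else 0)"
  have E: "E \<in> carrier_mat (Suc n) (Suc n)" by (simp add: E_def)
  have "det E = prod_list (diag_mat E)"
    by (rule det_lower_triangular[OF _ E]) (simp add: E_def)
  also have "diag_mat E = map (\<lambda>i. 1) [0..<Suc n]" by (simp add: diag_mat_def E_def)
  also have "prod_list \<dots> = 1" by (simp add: map_replicate_const)
  finally have detE: "det E = 1" .
  have EG: "(E * G) $$ (i,j) = G $$ (i,j) - (if i = 0 then 0 else G $$ (i,0) / a * G $$ (0,j))"
    if "i < Suc n" "j < Suc n" for i j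
  proof -
    have "(E * G) $$ (i,j) = (\<Sum>k<Suc n. E $$ (i,k) * G $$ (k,j))"
      using that E G by (simp add: scalar_prod_def lessThan_atLeast0)
    also have "\<dots> = (\<Sum>k<Suc n. G $$ (k,j) * of_bool (k = i)
                     + G $$ (k,j) * of_bool (k = 0) * (if i = 0 then 0 else - G $$ (i,0) / a))"
      using that by (intro sum.cong) (auto simp: E_def)
    also have "\<dots> = G $$ (i,j) + G $$ (0,j) * (if i = 0 then 0 else - G $$ (i,0) / a)"
      using that by (simp add: sum.distrib sum_distrib_right[symmetric] sum_lessThan_of_bool_eq)
    finally show ?thesis by auto
  qed
  have EGc: "E * G \<in> carrier_mat (Suc n) (Suc n)" using E G by simp
  have "det G = det (E * G)" using det_mult[OF E G] detE by simp
  also have "\<dots> = (\<Sum>i<Suc n. (E * G) $$ (i,0) * cofactor (E * G) i 0)"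
    by (rule laplace_expansion_column[OF EGc]) simp
  also have "\<dots> = a * cofactor (E * G) 0 0"
    using EG[of _ 0] EG[of 0 0] a
    by (simp add: sum.lessThan_Suc_shift a_def del: sum.lessThan_Suc)
  also have "mat_delete (E * G) 0 0 = schur_complement n G"
    using E G EG by (intro eq_matI) (auto simp: mat_delete_def schur_complement_def a_def)
  then have "cofactor (E * G) 0 0 = det (schur_complement n G)" by (simp add: cofactor_def)
  finally show ?thesis by (simp add: a_def)
qed

lemma psd_mat_schur_complement:
  assumes G: "psd_mat (Suc n) G" and a: "0 < G $$ (0,0)"
  shows "psd_mat n (schur_complement n G)"
proof -
  define a where "a = G $$ (0,0)"
  have sym: "G $$ (i,j) = G $$ (j,i)" if "i < Suc n" "j < Suc n" for i j
    using G that by (simp add: psd_mat_def)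
  have "0 \<le> quad_form n (schur_complement n G) x" for x
  proof -
    define b where "b = (\<Sum>j<n. G $$ (0, Suc j) * x j)"
    define Q where "Q = (\<Sum>i<n. \<Sum>j<n. x i * G $$ (Suc i, Suc j) * x j)"
    have col: "G $$ (Suc i, 0) = G $$ (0, Suc i)" if "i < n" for i using sym[of "Suc i" 0] that by simp
    \<comment> \<open>extend x by the coordinate -b/a that minimises the form of G\<close>
    define y where "y = (\<lambda>l. if l = 0 then - b / a else x (l - 1))"
    have y_Suc: "y (Suc j) = x j" for j by (simp add: y_def)
    have bb: "b * b = (\<Sum>i<n. \<Sum>j<n. x i * G $$ (Suc i, 0) * (G $$ (0, Suc j) * x j))"
      unfolding sum_product[symmetric] by (simp add: b_def col mult_ac)
    have "quad_form n (schur_complement n G) x = (\<Sum>i<n. \<Sum>j<n.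
        x i * G $$ (Suc i, Suc j) * x j - x i * G $$ (Suc i, 0) * (G $$ (0, Suc j) * x j) / a)"
      unfolding quad_form_def schur_complement_def a_def
      by (auto intro!: sum.cong simp: algebra_simps)
    also have "\<dots> = Q - b * b / a"
      unfolding Q_def bb by (simp add: sum_subtractf sum_divide_distrib)
    also have "\<dots> = y 0 * a * y 0 + y 0 * b + b * y 0 + Q"
      using a by (simp add: y_def a_def field_simps)
    also have "\<dots> = quad_form (Suc n) G y"
      unfolding quad_form_def Q_def a_def b_def
      by (simp add: sum.lessThan_Suc_shift sum.distrib sum_distrib_left sum_distrib_right
          y_Suc col mult_ac del: sum.lessThan_Suc)
    also have "\<dots> \<ge> 0" using G by (simp add: psd_mat_def)
    finally show ?thesis .
  qed
  moreover have "schur_complement n G $$ (i,j) = schur_complement n G $$ (j,i)"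
    if "i < n" "j < n" for i j
    using that sym[of "Suc i" "Suc j"] sym[of "Suc i" 0] sym[of "Suc j" 0]
    by (simp add: schur_complement_def)
  ultimately show ?thesis by (simp add: psd_mat_def schur_complement_def)
qed

lemma det_le_prod_diag_if_psd_mat:
  assumes "psd_mat n G"
  shows "det G \<le> (\<Prod>i<n. G $$ (i,i))"
  using assms
proof (induction n arbitrary: G)
  case 0
  then show ?case by (simp add: psd_mat_def)
next
  case (Suc n)
  have G: "G \<in> carrier_mat (Suc n) (Suc n)" using Suc.prems by (simp add: psd_mat_def)
  have diag: "0 \<le> G $$ (i,i)" if "i < Suc n" for i by (rule psd_mat_diag_nonneg[OF Suc.prems that])
  show ?case
  proof (cases "G $$ (0,0) = 0")
    case True
    have "det G = (\<Sum>j<Suc n. G $$ (0,j) * cofactor G 0 j)"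
      by (rule laplace_expansion_row[OF G]) simp
    also have "\<dots> = 0" using psd_mat_zero_diag_imp_zero_row[OF Suc.prems _ True] by simp
    finally have "det G = 0" .
    moreover have "0 \<le> (\<Prod>i<Suc n. G $$ (i,i))" by (rule prod_nonneg) (use diag in auto)
    ultimately show ?thesis by simp
  next
    case False
    define a where "a = G $$ (0,0)"
    define S where "S = schur_complement n G"
    have a: "0 < a" using diag[of 0] False by (simp add: a_def)
    have S: "psd_mat n S"
      unfolding S_def using Suc.prems a by (simp add: psd_mat_schur_complement a_def)
    have S_diag: "S $$ (i,i) \<le> G $$ (Suc i, Suc i)" if "i < n" for i
    proof -
      have "G $$ (Suc i, 0) = G $$ (0, Suc i)" using Suc.prems that by (simp add: psd_mat_def)
      then have "0 \<le> G $$ (Suc i, 0) * G $$ (0, Suc i) / a" using a by simp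
      then show ?thesis using that by (simp add: S_def schur_complement_def a_def)
    qed
    have "det G = a * det S" unfolding a_def S_def by (rule det_schur_complement[OF G False])
    also have "\<dots> \<le> a * (\<Prod>i<n. S $$ (i,i))"
      using Suc.IH[OF S] a by simp
    also have "\<dots> \<le> a * (\<Prod>i<n. G $$ (Suc i, Suc i))"
      using a S_diag psd_mat_diag_nonneg[OF S] by (intro mult_left_mono prod_mono) auto
    also have "\<dots> = (\<Prod>i<Suc n. G $$ (i,i))"
      by (simp add: prod.lessThan_Suc_shift a_def del: prod.lessThan_Suc)
    finally show ?thesis .
  qed
qed

lemma hadamard_inequality:
  fixes M :: "real mat"
  assumes M: "M \<in> carrier_mat n n"
  shows "(det M)\<^sup>2 \<le> (\<Prod>i<n. \<Sum>j<n. (M $$ (i,j))\<^sup>2)"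
proof -
  define G where "G = M * transpose_mat M"
  have G_entry: "G $$ (i,j) = (\<Sum>k<n. M $$ (i,k) * M $$ (j,k))" if "i < n" "j < n" for i j
    using M that by (simp add: G_def scalar_prod_def lessThan_atLeast0)
  have "quad_form n G x = (\<Sum>k<n. (\<Sum>i<n. x i * M $$ (i,k))\<^sup>2)" for x
  proof -
    have "quad_form n G x = (\<Sum>i<n. \<Sum>j<n. \<Sum>k<n. x i * M $$ (i,k) * (x j * M $$ (j,k)))"
      unfolding quad_form_def
      by (intro sum.cong refl) (simp add: G_entry sum_distrib_left sum_distrib_right mult_ac)
    also have "\<dots> = (\<Sum>k<n. \<Sum>i<n. \<Sum>j<n. x i * M $$ (i,k) * (x j * M $$ (j,k)))"
      by (subst sum.swap, rule sum.cong[OF refl], rule sum.swap)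
    finally show ?thesis by (simp add: power2_eq_square sum_product)
  qed
  moreover have "G \<in> carrier_mat n n" using M by (simp add: G_def)
  ultimately have "psd_mat n G" by (auto simp: psd_mat_def G_entry mult.commute intro: sum_nonneg)
  then have "det G \<le> (\<Prod>i<n. G $$ (i,i))" by (rule det_le_prod_diag_if_psd_mat)
  moreover have "det G = (det M)\<^sup>2"
    using det_mult[OF M, of "transpose_mat M"] det_transpose[OF M] M
    by (simp add: G_def power2_eq_square)
  ultimately show ?thesis by (simp add: G_entry power2_eq_square)
qed

lemma abs_det_le_pow_if_rows_bounded:
  fixes M :: "real mat"
  assumes M: "M \<in> carrier_mat n n" and B: "0 \<le> B"
    and rows: "\<And>i. i < n \<Longrightarrow> (\<Sum>j<n. (M $$ (i,j))\<^sup>2) \<le> B\<^sup>2"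
  shows "\<bar>det M\<bar> \<le> B ^ n"
proof -
  have "(det M)\<^sup>2 \<le> (\<Prod>i<n. \<Sum>j<n. (M $$ (i,j))\<^sup>2)" by (rule hadamard_inequality[OF M])
  also have "\<dots> \<le> (\<Prod>i<n. B\<^sup>2)" by (rule prod_mono) (simp add: rows sum_nonneg)
  also have "\<dots> = (B ^ n)\<^sup>2" by (simp add: power_mult[symmetric] power_mult_distrib mult.commute)
  finally show ?thesis using abs_le_square_iff[of "det M" "B ^ n"] B by simp
qed

section \<open>Small integral vectors in the kernel of an integral system\<close>


definition dot_upto :: "nat \<Rightarrow> (nat \<Rightarrow> real) \<Rightarrow> (nat \<Rightarrow> real) \<Rightarrow> real" where
  "dot_upto n a x = (\<Sum>l<n. a l * x l)"

definition kernel_upto :: "nat \<Rightarrow> (nat \<Rightarrow> real) set \<Rightarrow> (nat \<Rightarrow> real) set" where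
  "kernel_upto n R = {x. (\<forall>l\<ge>n. x l = 0) \<and> (\<forall>a\<in>R. dot_upto n a x = 0)}"

definition minor_mat :: "(nat \<Rightarrow> real) list \<Rightarrow> nat list \<Rightarrow> real mat" where
  "minor_mat as js = mat (length as) (length as) (\<lambda>(u,v). (as ! u) (js ! v))"

lemma minor_mat_carrier: "minor_mat as js \<in> carrier_mat (length as) (length as)"
  by (simp add: minor_mat_def)

lemma det_in_Ints:
  fixes M :: "real mat"
  assumes "M \<in> carrier_mat n n" "\<And>i j. i < n \<Longrightarrow> j < n \<Longrightarrow> M $$ (i,j) \<in> \<int>"
  shows "det M \<in> \<int>"
proof -
  have "det M = (\<Sum>p \<in> {p. p permutes {0..<n}}. signof p * (\<Prod>i = 0..<n. M $$ (i, p i)))"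
    by (rule det_def'[OF assms(1)])
  also have "\<dots> \<in> \<int>"
    using assms(2) by (intro Ints_sum Ints_mult Ints_prod) (auto simp: permutes_in_image)
  finally show ?thesis .
qed

lemma det_minor_mat_in_Ints:
  assumes "\<And>a l. a \<in> set as \<Longrightarrow> a l \<in> \<int>"
  shows "det (minor_mat as js) \<in> \<int>"
  using assms by (intro det_in_Ints[OF minor_mat_carrier]) (simp add: minor_mat_def)

lemma distinct_if_det_minor_mat_nonzero:
  assumes "length js = length as" "det (minor_mat as js) \<noteq> 0"
  shows "distinct js"
proof (rule ccontr)
  assume "\<not> distinct js"
  then obtain u v where uv: "u < length js" "v < length js" "u \<noteq> v" "js ! u = js ! v"
    by (auto simp: distinct_conv_nth)
  then have "col (minor_mat as js) u = col (minor_mat as js) v"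
    using assms(1) by (auto simp: minor_mat_def)
  then have "det (minor_mat as js) = 0"
    using uv assms(1) by (intro det_identical_columns[OF minor_mat_carrier, of u v]) auto
  with assms(2) show False by simp
qed

lemma sum_nth_distinct:
  assumes "distinct ds"
  shows "(\<Sum>v<length ds. f (ds ! v)) = sum f (set ds)"
  using assms by (simp add: sum.distinct_set_conv_list sum_list_sum_nth atLeast0LessThan)

lemma sum_nth_distinct_le:
  fixes f :: "nat \<Rightarrow> real"
  assumes "distinct ds" "set ds \<subseteq> {..<n}" "\<And>l. 0 \<le> f l"
  shows "(\<Sum>v<length ds. f (ds ! v)) \<le> (\<Sum>l<n. f l)"
proof -
  have "(\<Sum>v<length ds. f (ds ! v)) = sum f (set ds)" using assms(1) by (rule sum_nth_distinct)
  also have "\<dots> \<le> (\<Sum>l<n. f l)" using assms by (intro sum_mono2) auto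
  finally show ?thesis .
qed

lemma abs_det_minor_mat_le:
  assumes "distinct ds" "set ds \<subseteq> {..<n}" "length ds = length as"
    and "\<And>a. a \<in> set as \<Longrightarrow> (\<Sum>l<n. (a l)\<^sup>2) \<le> 4"
  shows "\<bar>det (minor_mat as ds)\<bar> \<le> 2 ^ length as"
proof (rule abs_det_le_pow_if_rows_bounded[OF minor_mat_carrier])
  fix u assume "u < length as"
  then have "(\<Sum>v<length as. (minor_mat as ds $$ (u,v))\<^sup>2) = (\<Sum>v<length ds. ((as ! u) (ds ! v))\<^sup>2)"
    using assms(3) by (simp add: minor_mat_def)
  also have "\<dots> \<le> (\<Sum>l<n. ((as ! u) l)\<^sup>2)" using assms(1,2) by (rule sum_nth_distinct_le) simp
  also have "\<dots> \<le> 4" using assms(4) \<open>u < length as\<close> by simp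
  finally show "(\<Sum>v<length as. (minor_mat as ds $$ (u,v))\<^sup>2) \<le> 2\<^sup>2" by simp
qed simp

lemma mat_delete_minor_mat:
  assumes "length cs = Suc (length as)" "v < length cs"
  shows "mat_delete (minor_mat (a # as) cs) 0 v = minor_mat as (take v cs @ drop (Suc v) cs)"
  using assms by (intro eq_matI) (auto simp: mat_delete_def minor_mat_def nth_append min_def)

text \<open>At column cs ! v, border_vec as cs holds the cofactor of entry (0, v) of
  minor_mat (a # as) cs, which does not depend on the new first row a.\<close>

definition border_vec :: "(nat \<Rightarrow> real) list \<Rightarrow> nat list \<Rightarrow> nat \<Rightarrow> real" where
  "border_vec as cs l = (\<Sum>v<length cs. of_bool (cs ! v = l) *
     ((-1) ^ v * det (minor_mat as (take v cs @ drop (Suc v) cs))))"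

lemma dot_upto_border_vec:
  assumes len: "length cs = Suc (length as)" and cs: "set cs \<subseteq> {..<n}"
  shows "dot_upto n a (border_vec as cs) = det (minor_mat (a # as) cs)"
proof -
  define C where "C v = (-1) ^ v * det (minor_mat as (take v cs @ drop (Suc v) cs))" for v
  have "dot_upto n a (border_vec as cs)
      = (\<Sum>l<n. \<Sum>v<length cs. a l * C v * of_bool (l = cs ! v))"
    unfolding dot_upto_def border_vec_def C_def[symmetric] sum_distrib_left
    by (intro sum.cong refl) auto
  also have "\<dots> = (\<Sum>v<length cs. \<Sum>l<n. a l * C v * of_bool (l = cs ! v))"
    by (rule sum.swap)
  also have "\<dots> = (\<Sum>v<length cs. a (cs ! v) * C v)"
    using cs by (intro sum.cong refl) (simp add: sum_lessThan_of_bool_eq subset_iff)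
  also have "\<dots> = (\<Sum>v<length cs.
      minor_mat (a # as) cs $$ (0,v) * cofactor (minor_mat (a # as) cs) 0 v)"
    using len by (intro sum.cong refl)
      (simp add: cofactor_def mat_delete_minor_mat C_def, simp add: minor_mat_def)
  also have "\<dots> = det (minor_mat (a # as) cs)"
    using len minor_mat_carrier[of "a # as" cs] by (intro laplace_expansion_row[symmetric]) auto
  finally show ?thesis .
qed

lemma border_vec_eq_0:
  assumes "l \<notin> set cs"
  shows "border_vec as cs l = 0"
  using assms nth_mem by (force simp: border_vec_def intro!: sum.neutral)

lemma border_vec_in_kernel_upto:
  assumes "length cs = Suc (length as)" "set cs \<subseteq> {..<n}"
    and "\<And>a. a \<in> R \<Longrightarrow> det (minor_mat (a # as) cs) = 0"
  shows "border_vec as cs \<in> kernel_upto n R"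
proof -
  have "l \<notin> set cs" if "n \<le> l" for l using assms(2) that by auto
  then show ?thesis using assms by (simp add: kernel_upto_def border_vec_eq_0 dot_upto_border_vec)
qed

lemma border_vec_in_Ints:
  assumes "\<And>a l. a \<in> set as \<Longrightarrow> a l \<in> \<int>"
  shows "border_vec as cs l \<in> \<int>"
  unfolding border_vec_def
  by (intro Ints_sum Ints_mult) (auto simp: of_bool_def intro: det_minor_mat_in_Ints assms)

lemma border_vec_nth:
  assumes "distinct cs" "v < length cs"
  shows "border_vec as cs (cs ! v) = (-1) ^ v * det (minor_mat as (take v cs @ drop (Suc v) cs))"
proof -
  have "{..<length cs} \<inter> {u. cs ! u = cs ! v} = {v}"
    using assms by (auto simp: nth_eq_iff_index_eq)
  then show ?thesis by (simp add: border_vec_def)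
qed

lemma abs_border_vec_le:
  assumes "distinct cs" "set cs \<subseteq> {..<n}" "length cs = Suc (length as)"
    and "\<And>a. a \<in> set as \<Longrightarrow> (\<Sum>l<n. (a l)\<^sup>2) \<le> 4"
  shows "\<bar>border_vec as cs l\<bar> \<le> 2 ^ length as"
proof (cases "l \<in> set cs")
  case True
  then obtain v where v: "v < length cs" "l = cs ! v" by (auto simp: in_set_conv_nth)
  define ds where "ds = take v cs @ drop (Suc v) cs"
  have "distinct ds"
    using assms(1) unfolding ds_def by (subst (asm) id_take_nth_drop[OF v(1)]) auto
  moreover have "set ds \<subseteq> {..<n}"
    using assms(2) set_take_subset[of v cs] set_drop_subset[of "Suc v" cs] by (auto simp: ds_def)
  moreover have "length ds = length as" using assms(3) v(1) by (simp add: ds_def)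
  ultimately have "\<bar>det (minor_mat as ds)\<bar> \<le> 2 ^ length as"
    using assms(4) by (rule abs_det_minor_mat_le)
  then show ?thesis using border_vec_nth[OF assms(1) v(1)] v(2) by (simp add: ds_def abs_mult)
next
  case False
  then show ?thesis by (simp add: border_vec_eq_0)
qed

lemma length_le_if_det_minor_mat_nonzero:
  assumes "set js \<subseteq> {..<n}" "length js = length as" "det (minor_mat as js) \<noteq> 0"
  shows "length as \<le> n"
proof -
  have "distinct js" using assms(2,3) by (rule distinct_if_det_minor_mat_nonzero)
  then have "length as = card (set js)" using assms(2) by (simp add: distinct_card)
  also have "\<dots> \<le> n" using assms(1) card_mono[of "{..<n}" "set js"] by simp
  finally show ?thesis .
qed

lemma obtain_maximal_nonsingular_minor:
  obtains as js where "set as \<subseteq> R" "set js \<subseteq> {..<n}" "length js = length as"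
    "det (minor_mat as js) \<noteq> 0"
    "\<And>as' js'. set as' \<subseteq> R \<Longrightarrow> set js' \<subseteq> {..<n} \<Longrightarrow>
       length as' = Suc (length as) \<Longrightarrow> length js' = length as' \<Longrightarrow> det (minor_mat as' js') = 0"
proof -
  define K where "K = {k. \<exists>as js. length as = k \<and> set as \<subseteq> R \<and> set js \<subseteq> {..<n} \<and>
     length js = k \<and> det (minor_mat as js) \<noteq> 0}"
  have "det (minor_mat [] []) = 1" using minor_mat_carrier[of "[]" "[]"] by simp
  then have "0 \<in> K" unfolding K_def mem_Collect_eq by (intro exI[of _ "[]"]) simp
  have "K \<subseteq> {..n}"
    unfolding K_def using length_le_if_det_minor_mat_nonzero by auto
  then have "finite K" by (rule finite_subset) simp
  then have "Max K \<in> K" using \<open>0 \<in> K\<close> by (intro Max_in) auto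
  then obtain as js where as_js: "length as = Max K" "set as \<subseteq> R" "set js \<subseteq> {..<n}"
      "length js = length as" "det (minor_mat as js) \<noteq> 0"
    unfolding K_def mem_Collect_eq by metis
  have maximal: "det (minor_mat as' js') = 0"
    if "set as' \<subseteq> R" "set js' \<subseteq> {..<n}" "length as' = Suc (length as)"
      "length js' = length as'" for as' js'
  proof (rule ccontr)
    assume "det (minor_mat as' js') \<noteq> 0"
    then have "length as' \<in> K" unfolding K_def using that by auto
    then have "length as' \<le> Max K" by (rule Max_ge[OF \<open>finite K\<close>])
    with that(3) as_js(1) show False by simp
  qed
  show ?thesis by (rule that[OF as_js(2-5) maximal])
qed

lemma kernel_upto_trivial_if_full_minor:
  assumes as: "set as \<subseteq> R" "length as = n" and js: "set js \<subseteq> {..<n}" "length js = n"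
    and det: "det (minor_mat as js) \<noteq> 0" and x: "x \<in> kernel_upto n R"
  shows "x = (\<lambda>l. 0)"
proof -
  have dist: "distinct js"
    by (rule distinct_if_det_minor_mat_nonzero[OF _ det]) (simp add: js(2) as(2))
  then have set_js: "set js = {..<n}" using js by (simp add: card_subset_eq distinct_card)
  define y where "y = vec n (\<lambda>v. x (js ! v))"
  have M: "minor_mat as js \<in> carrier_mat n n" using minor_mat_carrier[of as js] as(2) by simp
  have "minor_mat as js *\<^sub>v y = 0\<^sub>v n"
  proof (rule eq_vecI)
    fix u assume "u < dim_vec (0\<^sub>v n)"
    then have u: "u < n" by simp
    have "(minor_mat as js *\<^sub>v y) $ u = (\<Sum>v<length js. (as ! u) (js ! v) * x (js ! v))"
      using u as(2) js(2) by (simp add: minor_mat_def y_def scalar_prod_def lessThan_atLeast0)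
    also have "\<dots> = dot_upto n (as ! u) x"
      using sum_nth_distinct[OF dist, of "\<lambda>l. (as ! u) l * x l"] set_js by (simp add: dot_upto_def)
    also have "\<dots> = 0" using x as u nth_mem[of u as] by (auto simp: kernel_upto_def subset_iff)
    finally show "(minor_mat as js *\<^sub>v y) $ u = 0\<^sub>v n $ u" using u by simp
  qed (use M in simp)
  moreover have "y \<in> carrier_vec n" by (simp add: y_def)
  ultimately have y: "y = 0\<^sub>v n"
    using det_0_iff_vec_prod_zero_field[OF M] det by auto
  have "x l = 0" if "l < n" for l
  proof -
    have "l \<in> set js" using that set_js by simp
    then obtain v where "v < length js" "js ! v = l" by (auto simp: in_set_conv_nth)
    then have "x l = y $ v" using js(2) by (simp add: y_def)
    then show ?thesis using y \<open>v < length js\<close> js(2) by simp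
  qed
  then have "x l = 0" for l using x by (cases "l < n") (auto simp: kernel_upto_def)
  then show ?thesis by auto
qed

lemma bounded_integral_kernel_vector:
  assumes R_int: "\<And>a l. a \<in> R \<Longrightarrow> a l \<in> \<int>"
    and R_norm: "\<And>a. a \<in> R \<Longrightarrow> (\<Sum>l<n. (a l)\<^sup>2) \<le> 4"
    and x: "x \<in> kernel_upto n R" "x \<noteq> (\<lambda>l. 0)"
  shows "\<exists>w \<in> kernel_upto n R. w \<noteq> (\<lambda>l. 0) \<and> (\<forall>l. w l \<in> \<int>) \<and>
    (\<forall>l. \<bar>w l\<bar> \<le> 2 ^ (n - 1))"
proof (rule obtain_maximal_nonsingular_minor[of R n])
  fix as js assume as_js: "set as \<subseteq> R" "set js \<subseteq> {..<n}" "length js = length as"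
      "det (minor_mat as js) \<noteq> 0"
    and maximal: "\<And>as' js'. set as' \<subseteq> R \<Longrightarrow> set js' \<subseteq> {..<n} \<Longrightarrow>
       length as' = Suc (length as) \<Longrightarrow> length js' = length as' \<Longrightarrow> det (minor_mat as' js') = 0"
  have "length as \<noteq> n"
  proof
    assume "length as = n"
    then have "x = (\<lambda>l. 0)"
      using kernel_upto_trivial_if_full_minor[OF as_js(1) _ as_js(2) _ as_js(4) x(1)] as_js(3)
      by simp
    with x(2) show False ..
  qed
  then have k: "length as < n" using length_le_if_det_minor_mat_nonzero[OF as_js(2-4)] by simp
  have dist: "distinct js" using as_js(3,4) by (rule distinct_if_det_minor_mat_nonzero)
  have "card (set js) < card {..<n}" using k dist as_js(3) by (simp add: distinct_card)
  then have "\<not> {..<n} \<subseteq> set js" using card_mono[of "set js" "{..<n}"] by auto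
  then obtain j where j: "j < n" "j \<notin> set js" by auto
  define cs where "cs = js @ [j]"
  have cs: "length cs = Suc (length as)" "set cs \<subseteq> {..<n}" "distinct cs"
    using as_js(2,3) j dist by (auto simp: cs_def)
  show ?thesis
  proof (intro bexI[of _ "border_vec as cs"] conjI allI)
    show "border_vec as cs \<in> kernel_upto n R"
      using cs as_js(1) by (intro border_vec_in_kernel_upto maximal) auto
    have "border_vec as cs j = (-1) ^ length as * det (minor_mat as js)"
      using border_vec_nth[OF cs(3), of "length as" as] as_js(3) by (simp add: cs_def nth_append)
    then show "border_vec as cs \<noteq> (\<lambda>l. 0)" using as_js(4) by (auto dest: fun_cong[of _ _ j])
    show "border_vec as cs l \<in> \<int>" for l using as_js(1) R_int by (intro border_vec_in_Ints) blast
    have "\<bar>border_vec as cs l\<bar> \<le> 2 ^ length as" for l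
      using cs as_js(1) R_norm by (intro abs_border_vec_le) auto
    also have "(2::real) ^ length as \<le> 2 ^ (n - 1)" using k by (intro power_increasing) auto
    finally show "\<bar>border_vec as cs l\<bar> \<le> 2 ^ (n - 1)" for l .
  qed
qed

section \<open>The Haken normal cone\<close>

lemma matching_eqns_lincomb:
  assumes "matching_eqns gl x" "matching_eqns gl y"
  shows "matching_eqns gl (\<lambda>i. a * x i + b * y i)"
proof -
  have "arc_sum T f v (\<lambda>i. a * x i + b * y i) = a * arc_sum T f v x + b * arc_sum T f v y"
    for T f v
    by (simp add: arc_sum_def algebra_simps)
  then show ?thesis using assms by (simp add: matching_eqns_def)
qed

lemma haken_cone_lincomb:
  assumes "x \<in> haken_cone t gl" "y \<in> haken_cone t gl"
    and "\<And>i. i < 7 * t \<Longrightarrow> 0 \<le> a * x i + b * y i"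
  shows "(\<lambda>i. a * x i + b * y i) \<in> haken_cone t gl"
  using assms matching_eqns_lincomb[of gl x y a b] by (simp add: haken_cone_def)

lemma haken_cone_nonneg: "x \<in> haken_cone t gl \<Longrightarrow> 0 \<le> x i"
  unfolding haken_cone_def by (cases "i < 7 * t") auto

lemma haken_cone_eq_0: "x \<in> haken_cone t gl \<Longrightarrow> 7 * t \<le> i \<Longrightarrow> x i = 0"
  unfolding haken_cone_def by auto

lemma ray_subset_haken_cone:
  assumes "r \<in> haken_cone t gl"
  shows "ray r \<subseteq> haken_cone t gl"
proof
  fix w assume "w \<in> ray r"
  then obtain c where c: "0 \<le> c" "w = (\<lambda>i. c * r i + 0 * r i)" unfolding ray_def by auto
  show "w \<in> haken_cone t gl"
    unfolding c(2) using assms c(1) haken_cone_nonneg[OF assms] by (intro haken_cone_lincomb) auto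
qed

definition supp_upto :: "nat \<Rightarrow> (nat \<Rightarrow> real) \<Rightarrow> nat set" where
  "supp_upto n x = {i. i < n \<and> x i \<noteq> 0}"

lemma finite_supp_upto [simp]: "finite (supp_upto n x)"
  by (simp add: supp_upto_def)

lemma card_supp_upto_le: "card (supp_upto n x) \<le> n"
  using card_mono[of "{..<n}" "supp_upto n x"] by (auto simp: supp_upto_def)

lemma haken_cone_eq_zero_iff:
  assumes "x \<in> haken_cone t gl"
  shows "x = (\<lambda>i. 0) \<longleftrightarrow> supp_upto (7 * t) x = {}"
  using haken_cone_eq_0[OF assms] by (auto simp: supp_upto_def fun_eq_iff not_less)

lemma haken_cone_subtract_max_multiple:
  assumes x: "x \<in> haken_cone t gl" and y: "y \<in> haken_cone t gl" "y \<noteq> (\<lambda>i. 0)"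
  obtains c i0 where "0 \<le> c" "i0 \<in> supp_upto (7 * t) y" "(\<lambda>i. x i - c * y i) \<in> haken_cone t gl"
    "supp_upto (7 * t) (\<lambda>i. x i - c * y i) \<subseteq> supp_upto (7 * t) x - {i0}"
proof -
  let ?P = "supp_upto (7 * t) y"
  have "?P \<noteq> {}" using y haken_cone_eq_zero_iff by blast
  define c where "c = Min ((\<lambda>i. x i / y i) ` ?P)"
  have "c \<in> (\<lambda>i. x i / y i) ` ?P" unfolding c_def using \<open>?P \<noteq> {}\<close> by (intro Min_in) auto
  then obtain i0 where i0: "i0 \<in> ?P" "c = x i0 / y i0" by blast
  have y_pos: "0 < y i" if "i \<in> ?P" for i
    using that haken_cone_nonneg[OF y(1), of i] by (auto simp: supp_upto_def)
  have c: "0 \<le> c" using i0 y_pos[OF i0(1)] haken_cone_nonneg[OF x, of i0] by simp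
  have le: "c * y i \<le> x i" for i
  proof (cases "i \<in> ?P")
    case True
    then have "c \<le> x i / y i" unfolding c_def by (intro Min_le) auto
    then show ?thesis using y_pos[OF True] by (simp add: pos_le_divide_eq)
  next
    case False
    then have "y i = 0" using haken_cone_eq_0[OF y(1), of i] by (auto simp: supp_upto_def)
    then show ?thesis using haken_cone_nonneg[OF x, of i] by simp
  qed
  have "(\<lambda>i. 1 * x i + (- c) * y i) \<in> haken_cone t gl"
    using le by (intro haken_cone_lincomb[OF x y(1)]) auto
  moreover have "x i - c * y i = 0" if "x i = 0" for i
    using le[of i] that mult_nonneg_nonneg[OF c haken_cone_nonneg[OF y(1), of i]] by simp
  then have "supp_upto (7 * t) (\<lambda>i. x i - c * y i) \<subseteq> supp_upto (7 * t) x - {i0}"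
    using i0 y_pos[OF i0(1)] by (auto simp: supp_upto_def)
  ultimately show ?thesis using that[OF c i0(1)] by simp
qed

lemma haken_cone_smaller_supp_if_not_extreme_ray:
  assumes x: "x \<in> haken_cone t gl" "x \<noteq> (\<lambda>i. 0)"
    and not_extreme: "\<not> extreme_ray (haken_cone t gl) x"
  obtains z where "z \<in> haken_cone t gl" "z \<noteq> (\<lambda>i. 0)"
    "supp_upto (7 * t) z \<subset> supp_upto (7 * t) x"
proof -
  obtain a b where ab: "a \<in> haken_cone t gl" "b \<in> haken_cone t gl" "(\<lambda>i. a i + b i) = x"
      "a \<notin> ray x \<or> b \<notin> ray x"
    using x not_extreme unfolding extreme_ray_def by blast
  have "a i \<le> x i" "b i \<le> x i" for i
    using fun_cong[OF ab(3), of i] haken_cone_nonneg[OF ab(1), of i] haken_cone_nonneg[OF ab(2), of i]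
    by auto
  then obtain y where y: "y \<in> haken_cone t gl" "y \<notin> ray x" "\<And>i. y i \<le> x i"
    using ab(1,2,4) by blast
  obtain c i0 where c: "0 \<le> c" "i0 \<in> supp_upto (7 * t) x" "(\<lambda>i. y i - c * x i) \<in> haken_cone t gl"
      "supp_upto (7 * t) (\<lambda>i. y i - c * x i) \<subseteq> supp_upto (7 * t) y - {i0}"
    by (rule haken_cone_subtract_max_multiple[OF y(1) x])
  have "x i \<noteq> 0" if "y i \<noteq> 0" for i
    using y(3)[of i] haken_cone_nonneg[OF y(1), of i] that by linarith
  then have "supp_upto (7 * t) y \<subseteq> supp_upto (7 * t) x" by (auto simp: supp_upto_def)
  then have "supp_upto (7 * t) (\<lambda>i. y i - c * x i) \<subset> supp_upto (7 * t) x" using c(2,4) by blast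
  moreover have "(\<lambda>i. y i - c * x i) \<noteq> (\<lambda>i. 0)"
  proof
    assume "(\<lambda>i. y i - c * x i) = (\<lambda>i. 0)"
    then have "y = (\<lambda>i. c * x i)" by (simp add: fun_eq_iff)
    then show False using y(2) c(1) by (auto simp: ray_def)
  qed
  ultimately show ?thesis using that c(3) by blast
qed

lemma extreme_ray_supp_subset:
  assumes "x \<in> haken_cone t gl" "x \<noteq> (\<lambda>i. 0)"
  shows "\<exists>r. extreme_ray (haken_cone t gl) r \<and> supp_upto (7 * t) r \<subseteq> supp_upto (7 * t) x"
  using assms
proof (induction "card (supp_upto (7 * t) x)" arbitrary: x rule: less_induct)
  case less
  show ?case
  proof (cases "extreme_ray (haken_cone t gl) x")
    case False
    then obtain z where z: "z \<in> haken_cone t gl" "z \<noteq> (\<lambda>i. 0)"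
        "supp_upto (7 * t) z \<subset> supp_upto (7 * t) x"
      using haken_cone_smaller_supp_if_not_extreme_ray[OF less.prems] by blast
    then have "card (supp_upto (7 * t) z) < card (supp_upto (7 * t) x)"
      by (simp add: psubset_card_mono)
    then show ?thesis using less.hyps z by blast
  qed blast
qed

lemma obtain_pos_scale_below:
  fixes r x :: "nat \<Rightarrow> real"
  assumes "finite {i. r i \<noteq> 0}" "\<And>i. 0 \<le> r i" "\<And>i. r i = 0 \<Longrightarrow> x i = 0"
  obtains e where "0 < e" "\<And>i. e * \<bar>x i\<bar> \<le> r i"
proof
  let ?E = "insert 1 ((\<lambda>i. r i / (\<bar>x i\<bar> + 1)) ` {i. r i \<noteq> 0})"
  have "Min ?E \<in> ?E" using assms(1) by (intro Min_in) auto
  then show "0 < Min ?E" using assms(2) by (auto simp: order_neq_le_trans add_pos_nonneg)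
  show "Min ?E * \<bar>x i\<bar> \<le> r i" for i
  proof (cases "r i = 0")
    case False
    then have "Min ?E \<le> r i / (\<bar>x i\<bar> + 1)" using assms(1) by (intro Min_le) auto
    then have "Min ?E * (\<bar>x i\<bar> + 1) \<le> r i" by (simp add: pos_le_divide_eq add_pos_nonneg)
    moreover have "0 \<le> Min ?E" using \<open>0 < Min ?E\<close> by simp
    ultimately show ?thesis by (simp add: algebra_simps)
  qed (simp add: assms(3))
qed

lemma extreme_ray_kernel_line:
  assumes r: "extreme_ray (haken_cone t gl) r" and x: "matching_eqns gl x"
    "\<And>i. 7 * t \<le> i \<Longrightarrow> x i = 0" "\<And>i. r i = 0 \<Longrightarrow> x i = 0"
  shows "\<exists>c. x = (\<lambda>i. c * r i)"
proof -
  have rC: "r \<in> haken_cone t gl" using r by (simp add: extreme_ray_def)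
  have "{i. r i \<noteq> 0} \<subseteq> {..<7 * t}"
    using haken_cone_eq_0[OF rC] by (auto simp: not_less[symmetric])
  then obtain e where e: "0 < e" "\<And>i. e * \<bar>x i\<bar> \<le> r i"
    using obtain_pos_scale_below[of r x] haken_cone_nonneg[OF rC] x(3) finite_subset by blast
  \<comment> \<open>r splits as (r + e x)/2 + (r - e x)/2 inside the cone\<close>
  have in_cone: "(\<lambda>i. (1/2) * r i + s * x i) \<in> haken_cone t gl" if "\<bar>s\<bar> = e / 2" for s
  proof -
    have "0 \<le> (1/2) * r i + s * x i" for i
    proof -
      have "\<bar>s * x i\<bar> = (e / 2) * \<bar>x i\<bar>" using that by (simp add: abs_mult)
      then show ?thesis using e(2)[of i] abs_ge_minus_self[of "s * x i"] by linarith
    qed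
    then show ?thesis using rC x(1,2) matching_eqns_lincomb[of gl r x "1/2" s]
      by (auto simp: haken_cone_def)
  qed
  have "(\<lambda>i. (1/2) * r i + (e/2) * x i) \<in> ray r"
    using r in_cone[of "e/2"] in_cone[of "- e/2"] e(1) unfolding extreme_ray_def
    by (auto simp: fun_eq_iff algebra_simps)
  then obtain c where "\<And>i. (1/2) * r i + (e/2) * x i = c * r i" by (auto simp: ray_def fun_eq_iff)
  then have "x = (\<lambda>i. ((2 * c - 1) / e) * r i)" using e(1) by (auto simp: fun_eq_iff field_simps)
  then show ?thesis ..
qed

lemma dot_upto_indicator:
  assumes "p < n"
  shows "dot_upto n (\<lambda>l. of_bool (l = p)) x = x p"
  using sum_lessThan_of_bool_eq[OF assms, of x] by (simp add: dot_upto_def mult.commute)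

definition arc_row :: "nat \<Rightarrow> nat \<Rightarrow> nat \<Rightarrow> nat \<Rightarrow> nat \<Rightarrow> real" where
  "arc_row p q p' q' l = of_bool (l = p) + of_bool (l = q) - of_bool (l = p') - of_bool (l = q')"

lemma dot_upto_arc_row:
  assumes "p < n" "q < n" "p' < n" "q' < n"
  shows "dot_upto n (arc_row p q p' q') x = x p + x q - x p' - x q'"
proof -
  have "dot_upto n (arc_row p q p' q') x = dot_upto n (\<lambda>l. of_bool (l = p)) x
      + dot_upto n (\<lambda>l. of_bool (l = q)) x - dot_upto n (\<lambda>l. of_bool (l = p')) x
      - dot_upto n (\<lambda>l. of_bool (l = q')) x"
    unfolding dot_upto_def arc_row_def by (simp add: sum.distrib sum_subtractf algebra_simps)
  then show ?thesis using assms by (simp add: dot_upto_indicator)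
qed

lemma sum_of_bool_eq_le_1: "(\<Sum>l<(n::nat). of_bool (l = p) :: real) \<le> 1"
  by (simp add: of_bool_def)

lemma sum_sq_arc_row_le:
  assumes "p \<noteq> q" "p' \<noteq> q'"
  shows "(\<Sum>l<n. (arc_row p q p' q' l)\<^sup>2) \<le> 4"
proof -
  have "(arc_row p q p' q' l)\<^sup>2
      \<le> of_bool (l = p) + of_bool (l = q) + of_bool (l = p') + of_bool (l = q')" for l
    using assms unfolding arc_row_def
    by (cases "l = p"; cases "l = q"; cases "l = p'"; cases "l = q'") auto
  then have "(\<Sum>l<n. (arc_row p q p' q' l)\<^sup>2)
      \<le> (\<Sum>l<n. of_bool (l = p) + of_bool (l = q) + of_bool (l = p') + of_bool (l = q'))"
    by (rule sum_mono)
  also have "\<dots> = (\<Sum>l<n. of_bool (l = p)) + (\<Sum>l<n. of_bool (l = q))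
      + (\<Sum>l<n. of_bool (l = p')) + (\<Sum>l<n. of_bool (l = q'))"
    by (simp only: sum.distrib)
  also have "\<dots> \<le> 4"
    using sum_of_bool_eq_le_1[where n=n and p=p] sum_of_bool_eq_le_1[where n=n and p=q]
      sum_of_bool_eq_le_1[where n=n and p=p'] sum_of_bool_eq_le_1[where n=n and p=q'] by linarith
  finally show ?thesis .
qed

lemma quad_bounds:
  assumes "a < 4" "b < 4" "a \<noteq> b"
  shows "4 \<le> quad a b" "quad a b \<le> 6"
proof -
  have "a \<in> {0, 1, 2, 3}" "b \<in> {0, 1, 2, 3}" using assms by auto
  then show "4 \<le> quad a b" "quad a b \<le> 6" using assms(3) by (auto simp: quad_def)
qed

lemma valid_gluing_SomeD:
  assumes "valid_gluing t gl" "gl T f = Some (T', s)" "v < 4" "v \<noteq> f"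
  shows "T < t" "f < 4" "T' < t" "s f < 4" "s v < 4" "s f \<noteq> s v"
proof -
  show "T < t" "f < 4"
    using assms(1,2) unfolding valid_gluing_def by (metis not_le option.distinct(1))+
  show "T' < t" using assms(1,2) unfolding valid_gluing_def by blast
  have bij: "bij_betw s {..<4} {..<4}" using assms(1,2) unfolding valid_gluing_def by blast
  show "s f < 4" "s v < 4" using bij \<open>f < 4\<close> assms(3) bij_betw_apply by fastforce+
  show "s f \<noteq> s v" using bij_betw_imp_inj_on[OF bij] \<open>f < 4\<close> assms(3,4) by (auto dest: inj_onD)
qed

definition matching_rows :: "gluing \<Rightarrow> (nat \<Rightarrow> real) set" where
  "matching_rows gl =
     {arc_row (coord T v) (coord T (quad f v)) (coord T' (s v)) (coord T' (quad (s f) (s v)))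
       | T f T' s v. gl T f = Some (T', s) \<and> v < 4 \<and> v \<noteq> f}"

definition vanishing_rows :: "nat \<Rightarrow> (nat \<Rightarrow> real) \<Rightarrow> (nat \<Rightarrow> real) set" where
  "vanishing_rows n r = {(\<lambda>l. of_bool (l = i)) | i. i < n \<and> r i = 0}"

lemma matching_row_coords:
  assumes "valid_gluing t gl" "gl T f = Some (T', s)" "v < 4" "v \<noteq> f"
  shows "coord T v < 7 * t" "coord T (quad f v) < 7 * t" "coord T' (s v) < 7 * t"
    "coord T' (quad (s f) (s v)) < 7 * t"
    "coord T v \<noteq> coord T (quad f v)" "coord T' (s v) \<noteq> coord T' (quad (s f) (s v))"
  using valid_gluing_SomeD[OF assms] quad_bounds[of f v] quad_bounds[of "s f" "s v"] assms(3,4)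
  by (auto simp: coord_def)

lemma dot_upto_matching_row:
  assumes "valid_gluing t gl" "gl T f = Some (T', s)" "v < 4" "v \<noteq> f"
  shows "dot_upto (7 * t)
      (arc_row (coord T v) (coord T (quad f v)) (coord T' (s v)) (coord T' (quad (s f) (s v)))) x
    = arc_sum T f v x - arc_sum T' (s f) (s v) x"
  using matching_row_coords[OF assms] by (simp add: dot_upto_arc_row arc_sum_def)

lemma kernel_upto_cone_rows_iff:
  assumes vg: "valid_gluing t gl"
  shows "x \<in> kernel_upto (7 * t) (matching_rows gl \<union> vanishing_rows (7 * t) r) \<longleftrightarrow>
    matching_eqns gl x \<and> (\<forall>i. 7 * t \<le> i \<longrightarrow> x i = 0) \<and> (\<forall>i. r i = 0 \<longrightarrow> x i = 0)"
proof -
  have "(\<forall>a\<in>matching_rows gl. dot_upto (7 * t) a x = 0) \<longleftrightarrow> matching_eqns gl x"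
    unfolding matching_eqns_def
  proof (intro iffI allI impI ballI)
    fix T f T' s v assume "\<forall>a\<in>matching_rows gl. dot_upto (7 * t) a x = 0"
      and h: "gl T f = Some (T', s) \<and> v < 4 \<and> v \<noteq> f"
    moreover have "arc_row (coord T v) (coord T (quad f v)) (coord T' (s v)) (coord T' (quad (s f) (s v)))
        \<in> matching_rows gl"
      using h unfolding matching_rows_def by blast
    ultimately show "arc_sum T f v x = arc_sum T' (s f) (s v) x"
      using dot_upto_matching_row[OF vg] by fastforce
  next
    fix a assume "\<forall>T f T' s v. gl T f = Some (T', s) \<and> v < 4 \<and> v \<noteq> f \<longrightarrow>
        arc_sum T f v x = arc_sum T' (s f) (s v) x" and "a \<in> matching_rows gl"
    then show "dot_upto (7 * t) a x = 0"
      using dot_upto_matching_row[OF vg] by (auto simp: matching_rows_def)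
  qed
  moreover have "(\<forall>a\<in>vanishing_rows (7 * t) r. dot_upto (7 * t) a x = 0)
      \<longleftrightarrow> (\<forall>i<7 * t. r i = 0 \<longrightarrow> x i = 0)"
    by (auto simp: vanishing_rows_def dot_upto_indicator)
  ultimately show ?thesis by (auto simp: kernel_upto_def not_le[symmetric])
qed

lemma cone_rows_in_Ints: "a \<in> matching_rows gl \<union> vanishing_rows n r \<Longrightarrow> a l \<in> \<int>"
  by (auto simp: matching_rows_def vanishing_rows_def arc_row_def)

lemma cone_rows_sum_sq_le:
  assumes "valid_gluing t gl" "a \<in> matching_rows gl \<union> vanishing_rows n r"
  shows "(\<Sum>l<n. (a l)\<^sup>2) \<le> 4"
  using assms(2)
proof
  assume "a \<in> matching_rows gl"
  then show ?thesis
    using sum_sq_arc_row_le matching_row_coords(5,6)[OF assms(1)] by (auto simp: matching_rows_def)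
next
  assume "a \<in> vanishing_rows n r"
  then obtain i where "a = (\<lambda>l. of_bool (l = i))" by (auto simp: vanishing_rows_def)
  then have "(a l)\<^sup>2 = of_bool (l = i)" for l by simp
  then show ?thesis using sum_of_bool_eq_le_1[where n=n and p=i] by simp
qed

lemma extreme_ray_bounded_integral_point:
  assumes vg: "valid_gluing t gl" and r: "extreme_ray (haken_cone t gl) r"
  shows "\<exists>w \<in> ray r. w \<noteq> (\<lambda>i. 0) \<and> is_integral w \<and> (\<forall>i. w i \<le> 2 ^ (7 * t - 1))"
proof -
  let ?R = "matching_rows gl \<union> vanishing_rows (7 * t) r"
  have rC: "r \<in> haken_cone t gl" and r0: "r \<noteq> (\<lambda>i. 0)"
    using r by (simp_all add: extreme_ray_def)
  have "r \<in> kernel_upto (7 * t) ?R"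
    using rC haken_cone_eq_0[OF rC] by (simp add: kernel_upto_cone_rows_iff[OF vg] haken_cone_def)
  then have "\<exists>w' \<in> kernel_upto (7 * t) ?R. w' \<noteq> (\<lambda>i. 0) \<and> (\<forall>l. w' l \<in> \<int>) \<and>
      (\<forall>l. \<bar>w' l\<bar> \<le> 2 ^ (7 * t - 1))"
    using r0 by (intro bounded_integral_kernel_vector cone_rows_in_Ints cone_rows_sum_sq_le[OF vg])
  then obtain w' where w': "w' \<in> kernel_upto (7 * t) ?R" "w' \<noteq> (\<lambda>i. 0)" "\<And>l. w' l \<in> \<int>"
      "\<And>l. \<bar>w' l\<bar> \<le> 2 ^ (7 * t - 1)"
    by blast
  have "\<exists>c. w' = (\<lambda>i. c * r i)"
    using w'(1) by (intro extreme_ray_kernel_line[OF r]) (auto simp: kernel_upto_cone_rows_iff[OF vg])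
  then obtain c where c: "w' = (\<lambda>i. c * r i)" ..
  \<comment> \<open>w' may point away from the cone, so take |w'| = |c| r\<close>
  have abs_w': "\<bar>w' i\<bar> = \<bar>c\<bar> * r i" for i
    using haken_cone_nonneg[OF rC, of i] by (simp add: c abs_mult)
  show ?thesis
  proof (intro bexI[of _ "\<lambda>i. \<bar>c\<bar> * r i"] conjI allI)
    show "(\<lambda>i. \<bar>c\<bar> * r i) \<in> ray r" by (auto simp: ray_def)
    show "(\<lambda>i. \<bar>c\<bar> * r i) \<noteq> (\<lambda>i. 0)" using w'(2) by (auto simp: c fun_eq_iff)
    show "is_integral (\<lambda>i. \<bar>c\<bar> * r i)" using w'(3) abs_w' by (metis is_integral_def Ints_abs)
    show "\<bar>c\<bar> * r i \<le> 2 ^ (7 * t - 1)" for i using w'(4) abs_w' by metis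
  qed
qed

definition small_integral_points :: "nat \<Rightarrow> gluing \<Rightarrow> (nat \<Rightarrow> real) set" where
  "small_integral_points t gl = {w \<in> haken_cone t gl.
     is_integral w \<and> w \<noteq> (\<lambda>i. 0) \<and> (\<forall>i. w i \<le> 2 ^ (7 * t - 1))}"

lemma haken_cone_peel_small_point:
  assumes vg: "valid_gluing t gl" and v: "v \<in> haken_cone t gl" "v \<noteq> (\<lambda>i. 0)"
  obtains c w where "0 \<le> c" "w \<in> small_integral_points t gl" "(\<lambda>i. v i - c * w i) \<in> haken_cone t gl"
    "card (supp_upto (7 * t) (\<lambda>i. v i - c * w i)) < card (supp_upto (7 * t) v)"
proof -
  obtain r where r: "extreme_ray (haken_cone t gl) r" "supp_upto (7 * t) r \<subseteq> supp_upto (7 * t) v"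
    using extreme_ray_supp_subset[OF v] by blast
  obtain w where w: "w \<in> ray r" "w \<noteq> (\<lambda>i. 0)" "is_integral w" "\<forall>i. w i \<le> 2 ^ (7 * t - 1)"
    using extreme_ray_bounded_integral_point[OF vg r(1)] by blast
  have "r \<in> haken_cone t gl" using r(1) by (simp add: extreme_ray_def)
  then have wC: "w \<in> haken_cone t gl" using ray_subset_haken_cone w(1) by blast
  have supp_w: "supp_upto (7 * t) w \<subseteq> supp_upto (7 * t) r"
    using w(1) by (auto simp: ray_def supp_upto_def)
  obtain c i0 where c: "0 \<le> c" "i0 \<in> supp_upto (7 * t) w" "(\<lambda>i. v i - c * w i) \<in> haken_cone t gl"
      "supp_upto (7 * t) (\<lambda>i. v i - c * w i) \<subseteq> supp_upto (7 * t) v - {i0}"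
    by (rule haken_cone_subtract_max_multiple[OF v(1) wC w(2)])
  have "card (supp_upto (7 * t) (\<lambda>i. v i - c * w i)) \<le> card (supp_upto (7 * t) v - {i0})"
    using c(4) by (intro card_mono) auto
  also have "\<dots> < card (supp_upto (7 * t) v)"
    using c(2) r(2) supp_w by (intro card_Diff1_less) auto
  finally show ?thesis
    using that[OF c(1) _ c(3)] wC w by (simp add: small_integral_points_def)
qed

lemma haken_cone_decomposition:
  assumes vg: "valid_gluing t gl" and "v \<in> haken_cone t gl"
  shows "\<exists>k \<mu> ws. k \<le> card (supp_upto (7 * t) v) \<and>
    (\<forall>j<k. 0 \<le> \<mu> j \<and> ws j \<in> small_integral_points t gl) \<and> v = (\<lambda>i. \<Sum>j<k. \<mu> j * ws j i)"
  using assms(2)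
proof (induction "card (supp_upto (7 * t) v)" arbitrary: v rule: less_induct)
  case less
  show ?case
  proof (cases "v = (\<lambda>i. 0)")
    case False
    obtain c w where c: "0 \<le> c" "w \<in> small_integral_points t gl"
        "(\<lambda>i. v i - c * w i) \<in> haken_cone t gl"
        "card (supp_upto (7 * t) (\<lambda>i. v i - c * w i)) < card (supp_upto (7 * t) v)"
      by (rule haken_cone_peel_small_point[OF vg less.prems False])
    obtain k \<mu> ws where IH: "k \<le> card (supp_upto (7 * t) (\<lambda>i. v i - c * w i))"
        "\<forall>j<k. 0 \<le> \<mu> j \<and> ws j \<in> small_integral_points t gl"
        "(\<lambda>i. v i - c * w i) = (\<lambda>i. \<Sum>j<k. \<mu> j * ws j i)"
      using less.hyps[OF c(4,3)] by blast
    show ?thesis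
    proof (intro exI[of _ "Suc k"] exI[of _ "\<mu>(k := c)"] exI[of _ "ws(k := w)"] conjI)
      show "Suc k \<le> card (supp_upto (7 * t) v)" using IH(1) c(4) by simp
      show "\<forall>j<Suc k. 0 \<le> (\<mu>(k := c)) j \<and> (ws(k := w)) j \<in> small_integral_points t gl"
        using IH(2) c(1,2) by (auto simp: less_Suc_eq)
      have "(\<Sum>j<Suc k. (\<mu>(k := c)) j * (ws(k := w)) j i) = v i" for i
        using fun_cong[OF IH(3), of i] by simp
      then show "v = (\<lambda>i. \<Sum>j<Suc k. (\<mu>(k := c)) j * (ws(k := w)) j i)" by simp
    qed
  qed (intro exI[of _ 0]; simp)
qed

lemma minimal_vertex_solution_le:
  assumes vg: "valid_gluing t gl" and v: "minimal_vertex_solution t gl v"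
  shows "v i \<le> 2 ^ (7 * t - 1)"
proof -
  obtain r where r: "extreme_ray (haken_cone t gl) r" "v \<in> ray r"
      "\<forall>w\<in>ray r. w \<noteq> (\<lambda>i. 0) \<and> is_integral w \<longrightarrow> (\<exists>c\<ge>1. w = (\<lambda>i. c * v i))"
    using v unfolding minimal_vertex_solution_def by blast
  obtain w where w: "w \<in> ray r" "w \<noteq> (\<lambda>i. 0)" "is_integral w" "\<forall>i. w i \<le> 2 ^ (7 * t - 1)"
    using extreme_ray_bounded_integral_point[OF vg r(1)] by blast
  obtain c where c: "1 \<le> c" "w = (\<lambda>i. c * v i)" using r(3) w(1-3) by blast
  have "0 \<le> v i"
    using r(1,2) ray_subset_haken_cone haken_cone_nonneg by (fastforce simp: extreme_ray_def)
  then have "v i \<le> c * v i" using c(1) by (simp add: mult_le_cancel_right1)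
  also have "\<dots> \<le> 2 ^ (7 * t - 1)" using w(4) c(2) by simp
  finally show ?thesis .
qed

lemma hilbert_basis_eq_if_le:
  assumes v: "v \<in> hilbert_basis t gl"
    and w: "w \<in> haken_cone t gl" "is_integral w" "w \<noteq> (\<lambda>i. 0)"
    and le: "\<And>i. w i \<le> v i"
  shows "v = w"
proof (rule ccontr)
  assume "v \<noteq> w"
  have vC: "v \<in> haken_cone t gl" "is_integral v" using v by (simp_all add: hilbert_basis_def)
  have "(\<lambda>i. 1 * v i + (-1) * w i) \<in> haken_cone t gl"
    using le by (intro haken_cone_lincomb[OF vC(1) w(1)]) simp
  then have "(\<lambda>i. v i - w i) \<in> haken_cone t gl" by simp
  moreover have "is_integral (\<lambda>i. v i - w i)" using vC(2) w(2) by (simp add: is_integral_def)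
  moreover have "(\<lambda>i. v i - w i) \<noteq> (\<lambda>i. 0)" using \<open>v \<noteq> w\<close> by (auto simp: fun_eq_iff)
  ultimately have "\<exists>a b. a \<in> haken_cone t gl \<and> b \<in> haken_cone t gl \<and>
      is_integral a \<and> is_integral b \<and> a \<noteq> (\<lambda>i. 0) \<and> b \<noteq> (\<lambda>i. 0) \<and> v = (\<lambda>i. a i + b i)"
    using w by (intro exI[of _ w] exI[of _ "\<lambda>i. v i - w i"]) auto
  with v show False unfolding hilbert_basis_def by blast
qed

lemma hilbert_basis_le:
  assumes vg: "valid_gluing t gl" and v: "v \<in> hilbert_basis t gl"
  shows "v i \<le> real (7 * t) * 2 ^ (7 * t - 1)"
proof -
  have vC: "v \<in> haken_cone t gl" and "v \<noteq> (\<lambda>i. 0)" using v by (simp_all add: hilbert_basis_def)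
  obtain k \<mu> ws where k: "k \<le> card (supp_upto (7 * t) v)"
      and ws: "\<And>j. j < k \<Longrightarrow> 0 \<le> \<mu> j \<and> ws j \<in> small_integral_points t gl"
      and v_eq: "v = (\<lambda>i. \<Sum>j<k. \<mu> j * ws j i)"
    using haken_cone_decomposition[OF vg vC] by blast
  obtain l where "v l \<noteq> 0" using \<open>v \<noteq> (\<lambda>i. 0)\<close> by auto
  then have "1 \<le> t" using haken_cone_eq_0[OF vC, of l] by (cases t) auto
  have ws_le: "0 \<le> ws j i" "ws j i \<le> 2 ^ (7 * t - 1)" if "j < k" for j i
    using ws[OF that] haken_cone_nonneg by (auto simp: small_integral_points_def)
  show ?thesis
  proof (cases "\<exists>j<k. 1 \<le> \<mu> j")
    case True
    then obtain j where j: "j < k" "1 \<le> \<mu> j" by blast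
    have "ws j i' \<le> \<mu> j * ws j i'" for i' using mult_right_mono[OF j(2) ws_le(1)[OF j(1)]] by simp
    also have "\<mu> j * ws j i' \<le> v i'" for i'
      unfolding v_eq using j(1) ws ws_le by (intro member_le_sum) auto
    finally have "v = ws j"
      using hilbert_basis_eq_if_le[OF v] ws[OF j(1)] by (auto simp: small_integral_points_def)
    then have "v i \<le> 1 * 2 ^ (7 * t - 1)" using ws_le[OF j(1)] by simp
    also have "\<dots> \<le> real (7 * t) * 2 ^ (7 * t - 1)" using \<open>1 \<le> t\<close> by (intro mult_right_mono) auto
    finally show ?thesis .
  next
    case False
    have "v i = (\<Sum>j<k. \<mu> j * ws j i)" using v_eq by simp
    also have "\<dots> \<le> (\<Sum>j<k. 2 ^ (7 * t - 1))"
    proof (rule sum_mono)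
      fix j assume "j \<in> {..<k}"
      then have "\<mu> j * ws j i \<le> 1 * ws j i"
        using False ws ws_le by (intro mult_right_mono) (auto simp: not_le less_imp_le)
      then show "\<mu> j * ws j i \<le> 2 ^ (7 * t - 1)" using ws_le(2)[of j i] \<open>j \<in> {..<k}\<close> by simp
    qed
    also have "\<dots> \<le> real (7 * t) * 2 ^ (7 * t - 1)"
      using k card_supp_upto_le[of "7 * t" v] by (simp add: mult_right_mono)
    finally show ?thesis .
  qed
qed

theorem lemma6p1:
  fixes t :: nat and gl :: gluing
  assumes "triangulated_3manifold t gl"
  shows "(\<forall>v. minimal_vertex_solution t gl v \<longrightarrow> (\<forall>i < 7 * t. v i \<le> 2 ^ (7 * t - 1)))
       \<and> (\<forall>v \<in> hilbert_basis t gl. \<forall>i < 7 * t. v i \<le> real t * 2 ^ (7 * t + 2))"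
proof (intro conjI allI impI ballI)
  have vg: "valid_gluing t gl" using assms by (simp add: triangulated_3manifold_def)
  show "v i \<le> 2 ^ (7 * t - 1)" if "minimal_vertex_solution t gl v" for v i
    using minimal_vertex_solution_le[OF vg that] .
  fix v i assume v: "v \<in> hilbert_basis t gl" and i: "i < 7 * t"
  have "7 * t + 2 = (7 * t - 1) + 3" using i by simp
  then have "(2::real) ^ (7 * t + 2) = 8 * 2 ^ (7 * t - 1)" by (simp only: power_add) simp
  then have "real (7 * t) * 2 ^ (7 * t - 1) \<le> real t * 2 ^ (7 * t + 2)" by simp
  then show "v i \<le> real t * 2 ^ (7 * t + 2)" using hilbert_basis_le[OF vg v, of i] by linarith
qed

end
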